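(* Let $\mu$ be a log-concave probability measure on $\mathbb R^n$, let $\psi$ be a convex function on $\mathbb R^n$ (with $\psi\in L_1(\mu)$) and let $m$ be a median of $\psi$ with respect to $\mu$. Then $$\mu\Big(\Big\{x:\psi(x)<m-t\int|\psi-m|\,d\mu\Big\}\Big)\leqslant\frac12\exp(-t/16)$$ for all $t>0$. *)

theory Defs
  imports "HOL-Probability.Probability"
begin

text \<open>Log-concavity of a Borel measure on a Euclidean space (Borell):
  mu(lambda A + (1 - lambda) B) >= mu(A)^lambda mu(B)^(1 - lambda) for all compact A, B
  and 0 < lambda < 1. (Minkowski combinations of compact sets are compact, hence Borel.)\<close>
definition log_concave_measure :: "'a::euclidean_space measure \<Rightarrow> bool" where
  "log_concave_measure M \<longleftrightarrow>
     sets M = sets borel \<and>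
     (\<forall>A B (l::real). compact A \<and> compact B \<and> 0 < l \<and> l < 1 \<longrightarrow>
        measure M {l *\<^sub>R a + (1 - l) *\<^sub>R b | a b. a \<in> A \<and> b \<in> B}
          \<ge> measure M A powr l * measure M B powr (1 - l))"

definition is_median :: "'a measure \<Rightarrow> ('a \<Rightarrow> real) \<Rightarrow> real \<Rightarrow> bool" where
  "is_median M \<psi> m \<longleftrightarrow>
     measure M {x \<in> space M. \<psi> x \<ge> m} \<ge> 1/2 \<and> measure M {x \<in> space M. \<psi> x \<le> m} \<ge> 1/2"

end

theory Submission
  imports Defs
begin

text \<open>Sublevel sets of a convex function are stable under convex combinations: with
  \<open>l = 4 / (t + 4)\<close> and \<open>I = \<integral>|\<psi> - m|\<close>, \<open>l A + (1 - l) B \<subseteq> {\<psi> < m}\<close> for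
  \<open>A = {\<psi> < m - t I}\<close> and \<open>B = {\<psi> < m + 4 I}\<close>. Log-concavity, extended from compact to Borel
  sets by inner regularity, gives \<open>\<mu>(A)^l \<mu>(B)^(1 - l) \<le> \<mu>{\<psi> < m} \<le> 1/2\<close>, while Markov's inequality
  gives \<open>\<mu>(B) \<ge> 3/4\<close>. Solving for \<open>\<mu>(A)\<close> yields the exponential bound.\<close>

lemma finite_measure_inner_regular_compact:
  fixes M :: "'a::{second_countable_topology, complete_space} measure"
  assumes "finite_measure M" and "sets M = sets borel" and "B \<in> sets M" and "0 < e"
  obtains K where "K \<subseteq> B" and "compact K" and "measure M B - e < measure M K"
proof (cases "measure M B < e")
  case True
  then show ?thesis by (intro that[of "{}"]) auto
next
  case False
  interpret finite_measure M by fact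
  have "ennreal (measure M B - e) < emeasure M B"
    using False \<open>0 < e\<close> by (simp add: emeasure_eq_measure ennreal_lessI)
  also have "\<dots> = (SUP K \<in> {K. K \<subseteq> B \<and> compact K}. emeasure M K)"
    using assms(2,3) by (intro inner_regular) auto
  finally obtain K where K: "K \<subseteq> B" "compact K" and "ennreal (measure M B - e) < emeasure M K"
    by (auto simp: less_SUP_iff)
  then have "measure M B - e < measure M K"
    using False by (simp add: emeasure_eq_measure ennreal_less_iff)
  with K show ?thesis by (rule that)
qed

lemma finite_measure_inner_regular_compact_seq:
  fixes M :: "'a::{second_countable_topology, complete_space} measure"
  assumes "finite_measure M" and "sets M = sets borel" and "B \<in> sets M"
  obtains K where "\<And>n. K n \<subseteq> B" and "\<And>n. compact (K n)"
    and "(\<lambda>n. measure M (K n)) \<longlonglongrightarrow> measure M B"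
proof -
  interpret finite_measure M by fact
  have "\<exists>K. K \<subseteq> B \<and> compact K \<and> measure M B - inverse (Suc n) < measure M K" for n
    by (rule finite_measure_inner_regular_compact[OF assms]) auto
  then obtain K where K: "\<And>n. K n \<subseteq> B" "\<And>n. compact (K n)"
    and approx: "\<And>n. measure M B - inverse (Suc n) < measure M (K n)"
    by metis
  have "K n \<in> sets M" for n
    using K(2) assms(2) by (simp add: compact_imp_closed)
  then have upper: "\<forall>n. measure M (K n) \<le> measure M B"
    using K(1) assms(3) by (auto intro: finite_measure_mono)
  have lower: "\<forall>n. measure M B - inverse (Suc n) \<le> measure M (K n)"
    using approx by (simp add: less_imp_le)
  have "(\<lambda>n. measure M B - inverse (Suc n)) \<longlonglongrightarrow> measure M B"
    using tendsto_diff[OF tendsto_const LIMSEQ_inverse_real_of_nat] by simp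
  then have "(\<lambda>n. measure M (K n)) \<longlonglongrightarrow> measure M B"
    by (rule real_tendsto_sandwich[OF always_eventually[OF lower] always_eventually[OF upper] _ tendsto_const])
  with K show ?thesis by (rule that)
qed

lemma log_concave_measure_borel:
  fixes M :: "'a::euclidean_space measure"
  assumes "log_concave_measure M" and "finite_measure M"
    and "A \<in> sets M" and "B \<in> sets M" and "C \<in> sets M" and "0 < l" and "l < 1"
    and combination: "\<And>a b. a \<in> A \<Longrightarrow> b \<in> B \<Longrightarrow> l *\<^sub>R a + (1 - l) *\<^sub>R b \<in> C"
  shows "measure M A powr l * measure M B powr (1 - l) \<le> measure M C"
  \<comment> \<open>\<open>C\<close> stands in for the Minkowski combination of \<open>A\<close> and \<open>B\<close>, which need not be Borel.\<close>
proof -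
  interpret finite_measure M by fact
  have sets_M: "sets M = sets borel"
    using assms(1) by (simp add: log_concave_measure_def)
  obtain KA where KA: "\<And>n. KA n \<subseteq> A" "\<And>n. compact (KA n)"
    and lim_A: "(\<lambda>n. measure M (KA n)) \<longlonglongrightarrow> measure M A"
    using finite_measure_inner_regular_compact_seq[OF assms(2) sets_M assms(3)] by blast
  obtain KB where KB: "\<And>n. KB n \<subseteq> B" "\<And>n. compact (KB n)"
    and lim_B: "(\<lambda>n. measure M (KB n)) \<longlonglongrightarrow> measure M B"
    using finite_measure_inner_regular_compact_seq[OF assms(2) sets_M assms(4)] by blast
  have "measure M (KA n) powr l * measure M (KB n) powr (1 - l)
      \<le> measure M {l *\<^sub>R a + (1 - l) *\<^sub>R b | a b. a \<in> KA n \<and> b \<in> KB n}" for n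
    using assms(1) KA(2) KB(2) \<open>0 < l\<close> \<open>l < 1\<close> by (simp add: log_concave_measure_def)
  also have "\<dots> n \<le> measure M C" for n
    using KA(1) KB(1) assms(5) by (intro finite_measure_mono) (auto intro!: combination)
  finally have bound: "measure M (KA n) powr l * measure M (KB n) powr (1 - l) \<le> measure M C" for n .
  have "(\<lambda>n. measure M (KA n) powr l * measure M (KB n) powr (1 - l))
      \<longlonglongrightarrow> measure M A powr l * measure M B powr (1 - l)"
    using \<open>0 < l\<close> \<open>l < 1\<close> by (intro tendsto_mult tendsto_powr' lim_A lim_B tendsto_const) auto
  then show ?thesis
    by (rule tendsto_upperbound) (simp_all add: bound)
qed

lemma convex_on_less_combination:
  fixes f :: "'a::real_vector \<Rightarrow> real"
  assumes "convex_on S f" and "a \<in> S" and "b \<in> S" and "0 \<le> l" and "l \<le> 1"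
    and "f a < \<alpha>" and "f b < \<beta>"
  shows "f (l *\<^sub>R a + (1 - l) *\<^sub>R b) < l * \<alpha> + (1 - l) * \<beta>"
proof -
  have "f (l *\<^sub>R a + (1 - l) *\<^sub>R b) \<le> l * f a + (1 - l) * f b"
    using convex_onD[OF assms(1), of "1 - l" a b] assms(2-5) by simp
  also have "\<dots> < l * \<alpha> + (1 - l) * \<beta>"
  proof (cases "l = 0")
    case False
    then have "l * f a < l * \<alpha>"
      using assms(4,6) by simp
    moreover have "(1 - l) * f b \<le> (1 - l) * \<beta>"
      using assms(5,7) by (intro mult_left_mono) auto
    ultimately show ?thesis
      by (rule add_less_le_mono)
  qed (use assms(7) in simp)
  finally show ?thesis .
qed

lemma convex_on_UNIV_borel_measurable:
  fixes f :: "'a::euclidean_space \<Rightarrow> real"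
  assumes "convex_on UNIV f" and "sets M = sets borel"
  shows "f \<in> borel_measurable M"
  using convex_on_continuous[OF open_UNIV assms(1)]
  by (simp add: measurable_cong_sets[OF assms(2) refl] borel_measurable_continuous_onI)

lemma log_concave_measure_sublevel:
  fixes \<psi> :: "'a::euclidean_space \<Rightarrow> real"
  assumes "log_concave_measure M" and "finite_measure M" and "convex_on UNIV \<psi>"
    and "0 < l" and "l < 1"
  shows "measure M {x \<in> space M. \<psi> x < \<alpha>} powr l * measure M {x \<in> space M. \<psi> x < \<beta>} powr (1 - l)
    \<le> measure M {x \<in> space M. \<psi> x < l * \<alpha> + (1 - l) * \<beta>}"
proof -
  have sets_M: "sets M = sets borel"
    using assms(1) by (simp add: log_concave_measure_def)
  then have [measurable]: "\<psi> \<in> borel_measurable M"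
    using assms(3) by (rule convex_on_UNIV_borel_measurable[rotated])
  have sublevel: "{x \<in> space M. \<psi> x < c} \<in> sets M" for c
    by measurable
  have "space M = UNIV"
    using sets_eq_imp_space_eq[OF sets_M] by simp
  then show ?thesis
    by (intro log_concave_measure_borel[OF assms(1,2) sublevel sublevel sublevel assms(4,5)])
       (use convex_on_less_combination[OF assms(3)] assms(4,5) in auto)
qed

lemma (in prob_space) median_prob_less:
  assumes "is_median M \<psi> m" and [measurable]: "\<psi> \<in> borel_measurable M"
  shows "prob {x \<in> space M. \<psi> x < m} \<le> 1/2"
proof -
  have "{x \<in> space M. \<psi> x < m} = space M - {x \<in> space M. m \<le> \<psi> x}"
    by auto
  then show ?thesis
    using assms(1) prob_compl[of "{x \<in> space M. m \<le> \<psi> x}"] by (simp add: is_median_def)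
qed

lemma log_concave_median_mixture:
  fixes \<psi> :: "'a::euclidean_space \<Rightarrow> real"
  assumes "prob_space M" and "log_concave_measure M" and "convex_on UNIV \<psi>" and "is_median M \<psi> m"
    and "0 < l" and "l < 1" and "l * \<alpha> + (1 - l) * \<beta> = m"
  shows "measure M {x \<in> space M. \<psi> x < \<alpha>} powr l * measure M {x \<in> space M. \<psi> x < \<beta>} powr (1 - l)
    \<le> 1/2"
proof -
  interpret prob_space M by fact
  have "\<psi> \<in> borel_measurable M"
    using assms(2,3) by (intro convex_on_UNIV_borel_measurable) (simp_all add: log_concave_measure_def)
  have "prob {x \<in> space M. \<psi> x < \<alpha>} powr l * prob {x \<in> space M. \<psi> x < \<beta>} powr (1 - l)
      \<le> prob {x \<in> space M. \<psi> x < m}"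
    using log_concave_measure_sublevel[OF assms(2) finite_measure_axioms assms(3,5,6), of \<alpha> \<beta>]
    unfolding assms(7) .
  also have "\<dots> \<le> 1/2"
    by (rule median_prob_less) fact+
  finally show ?thesis .
qed

lemma (in prob_space) prob_less_add_ge_Markov:
  fixes f :: "'a \<Rightarrow> real"
  assumes "integrable M f" and "0 < c"
  shows "1 - (\<integral>x. \<bar>f x - a\<bar> \<partial>M) / c \<le> prob {x \<in> space M. f x < a + c}"
proof -
  have [measurable]: "f \<in> borel_measurable M"
    using assms(1) by (rule borel_measurable_integrable)
  have "prob {x \<in> space M. a + c \<le> f x} \<le> prob {x \<in> space M. c \<le> \<bar>f x - a\<bar>}"
    by (intro finite_measure_mono) auto
  also have "\<dots> \<le> (\<integral>x. \<bar>f x - a\<bar> \<partial>M) / c"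
    using assms by (intro integral_Markov_inequality_measure[where A = "{}"]) auto
  finally have "prob {x \<in> space M. a + c \<le> f x} \<le> (\<integral>x. \<bar>f x - a\<bar> \<partial>M) / c" .
  moreover have "{x \<in> space M. f x < a + c} = space M - {x \<in> space M. a + c \<le> f x}"
    by auto
  ultimately show ?thesis
    using prob_compl[of "{x \<in> space M. a + c \<le> f x}"] by simp
qed

lemma (in prob_space) prob_neq_of_integral_abs_diff_eq_0:
  fixes f :: "'a \<Rightarrow> real"
  assumes "integrable M f" and "(\<integral>x. \<bar>f x - a\<bar> \<partial>M) = 0"
  shows "prob {x \<in> space M. f x \<noteq> a} = 0"
proof -
  have "AE x in M. \<bar>f x - a\<bar> = 0"
    using integral_nonneg_eq_0_iff_AE[of M "\<lambda>x. \<bar>f x - a\<bar>"] assms by auto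
  then show ?thesis
    by (intro prob_eq_0_AE) simp
qed

lemma one_minus_inverse_le_ln:
  fixes x :: real
  assumes "0 < x"
  shows "1 - inverse x \<le> ln x"
  using ln_le_minus_one[of "inverse x"] assms by (simp add: ln_inverse)

lemma powr_mixture_le_half_imp:
  fixes a b t :: real
  assumes "0 \<le> a" and "3/4 \<le> b" and "0 < t"
    and mixture: "a powr (4 / (t + 4)) * b powr (1 - 4 / (t + 4)) \<le> 1/2"
  shows "a \<le> 1/2 * exp (- t / 16)"
proof (cases "a = 0")
  case False
  define l where "l = 4 / (t + 4)"
  have weights: "(t + 4) / 4 * l = 1" "(t + 4) / 4 * (1 - l) = t / 4"
    using \<open>t > 0\<close> by (simp_all add: l_def field_simps)
  have "a > 0" and "b > 0"
    using False assms(1,2) by auto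
  have "ln (a powr l * b powr (1 - l)) \<le> ln (1/2)"
    using mixture \<open>a > 0\<close> \<open>b > 0\<close> by (simp add: l_def)
  then have log_mixture: "l * ln a + (1 - l) * ln b \<le> - ln 2"
    using \<open>a > 0\<close> \<open>b > 0\<close> by (simp add: ln_mult ln_powr ln_div)
  have "ln a + t / 4 * ln b = ((t + 4) / 4 * l) * ln a + ((t + 4) / 4 * (1 - l)) * ln b"
    unfolding weights by simp
  also have "\<dots> = (t + 4) / 4 * (l * ln a + (1 - l) * ln b)"
    by (simp only: distrib_left mult.assoc)
  also have "\<dots> \<le> (t + 4) / 4 * (- ln 2)"
    using log_mixture \<open>t > 0\<close> by (intro mult_left_mono) auto
  finally have "ln a \<le> - ln 2 - t / 4 * (ln 2 + ln b)"
    by (simp add: algebra_simps)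
  also have "\<dots> \<le> - ln 2 - t / 16"
  proof -
    have "1/4 \<le> 1 - inverse (2 * b)"
      using assms(2) by (simp add: field_simps)
    also have "\<dots> \<le> ln 2 + ln b"
      using one_minus_inverse_le_ln[of "2 * b"] \<open>b > 0\<close> by (simp add: ln_mult)
    finally show ?thesis
      using \<open>t > 0\<close> by simp
  qed
  finally have "exp (ln a) \<le> exp (- ln 2 + - t / 16)"
    by simp
  also have "\<dots> = 1/2 * exp (- t / 16)"
    by (simp only: exp_add) (simp add: exp_minus)
  finally show ?thesis
    using \<open>a > 0\<close> by simp
qed simp

theorem theorem5p6:
  fixes M :: "'a::euclidean_space measure" and \<psi> :: "'a \<Rightarrow> real" and m t :: real
  assumes "prob_space M"
    and "log_concave_measure M"
    and "convex_on UNIV \<psi>"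
    and "integrable M \<psi>"
    and "is_median M \<psi> m"
    and "t > 0"
  shows "measure M {x \<in> space M. \<psi> x < m - t * (\<integral>x. \<bar>\<psi> x - m\<bar> \<partial>M)}
           \<le> 1/2 * exp (- t / 16)"
proof -
  interpret prob_space M by fact
  define I where "I = (\<integral>x. \<bar>\<psi> x - m\<bar> \<partial>M)"
  have "0 \<le> I"
    unfolding I_def by simp
  then consider "I = 0" | "I > 0"
    by fastforce
  then have "prob {x \<in> space M. \<psi> x < m - t * I} \<le> 1/2 * exp (- t / 16)"
  proof cases
    case 1
    then have "prob {x \<in> space M. \<psi> x < m - t * I} \<le> prob {x \<in> space M. \<psi> x \<noteq> m}"
      using assms(4) by (intro finite_measure_mono) auto
    also have "\<dots> = 0"
      using prob_neq_of_integral_abs_diff_eq_0[OF assms(4)] 1 by (simp add: I_def)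
    finally show ?thesis
      using exp_ge_zero[of "- t / 16"] by linarith
  next
    case 2
    define l where "l = 4 / (t + 4)"
    have "0 < l" "l < 1" and weight: "l * t = 4 * (1 - l)"
      using \<open>t > 0\<close> by (simp_all add: l_def field_simps)
    have "l * (m - t * I) + (1 - l) * (m + 4 * I) = m + (4 * (1 - l) - l * t) * I"
      by (simp add: algebra_simps)
    then have "l * (m - t * I) + (1 - l) * (m + 4 * I) = m"
      by (simp add: weight)
    then have "prob {x \<in> space M. \<psi> x < m - t * I} powr l
        * prob {x \<in> space M. \<psi> x < m + 4 * I} powr (1 - l) \<le> 1/2"
      using log_concave_median_mixture[OF assms(1-3,5) \<open>0 < l\<close> \<open>l < 1\<close>] by blast
    moreover have "3/4 \<le> prob {x \<in> space M. \<psi> x < m + 4 * I}"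
      using prob_less_add_ge_Markov[OF assms(4), of "4 * I" m] 2 by (simp add: I_def)
    ultimately show ?thesis
      using powr_mixture_le_half_imp[OF measure_nonneg _ \<open>t > 0\<close>] by (simp add: l_def)
  qed
  then show ?thesis
    by (simp only: I_def)
qed

end
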